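(* Every totally cyclic directed graph $\vec G$ (without loops and without parallel or antiparallel edges) whose underlying simple graph is three-edge-connected can be twisted, i.e. there exist a partial order $\prec$ on its edge set and a set $A$ such that $(\vec G,G,\prec,A)$ is a twisted graph.
   Context: Signed sets on a finite set $E$: pairs $X=(X^+,X^-)$ of disjoint subsets, $X(e)=+1,-1,0$ according as $e\in X^+$, $e\in X^-$, or neither; support $\underline X=X^+\cup X^-$; $-X=(X^-,X^+)$. Signed sets $X,Y$ are conformal if there is no $e$ with $X(e)=-Y(e)\neq0$; the composition is $(X\circ Y)(e)=X(e)$ if $X(e)\ne0$ and $Y(e)$ otherwise. For a total order $<$ on $E$, $\mathcal C(<)=\{(\{e_1,e_3\},\{e_2\}),(\{e_2\},\{e_1,e_3\}):e_1<e_2<e_3\}$, the signed circuits of the rank 2 oriented matroid $\mathcal M(<)$; its vectors are compositions of families of pairwise conformal members of $\mathcal C(<)$. For a partial order $\prec$ on $E$, $\mathcal C(\prec)$ is the intersection of $\mathcal C(<)$ over all total orders $<$ extending $\prec$. Let $\vec G=(V,\vec E)$ be a directed graph (no loops, no parallel or antiparallel edges) with underlying simple graph $G=(V,E)$, edges of $G$ and $\vec G$ identified. The circuits of the dual graphic oriented matroid $\mathcal M^*(\vec G)$ are the signed minimal cuts $\big(\{(u,w):u\in S,w\notin S\},\{(u,w):w\in S,u\notin S\}\big)$, $S\subset V$ with $S$ and $V\setminus S$ inducing connected subgraphs; a strong map $\mathcal M^*(\vec G)\to\mathcal M(<)$ means every such signed cut is a vector of $\mathcal M(<)$. For $v\in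 V$ let $C^*_v=(\{(u,v)\in\vec E\},\{(v,u)\in\vec E\})$. A twisted graph $T=(\vec G,G,\prec,A)$ consists of such $\vec G$, a partial order $\prec$ on $E$ and a set $A$ with: (1) $G$ is three-edge-connected; (2) $A\subset\mathcal C(\prec)$; (3) for every total order $<$ extending $\prec$ there is a strong map $\mathcal M^*(\vec G)\to\mathcal M(<)$; (4) $A$ can be partitioned as $\{A_v:v\in V\}$ such that for each $v$ the members of $A_v$ are pairwise conformal and their composition is $C^*_v$. A directed graph is totally cyclic if every edge lies in a directed cycle. *)

theory Defs
  imports Main
begin

type_synonym 'e sset = "'e set \<times> 'e set"

definition pos :: "'e sset \<Rightarrow> 'e set" where "pos X = fst X"
definition neg :: "'e sset \<Rightarrow> 'e set" where "neg X = snd X"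

definition signed_set_on :: "'e set \<Rightarrow> 'e sset \<Rightarrow> bool" where
  "signed_set_on E X \<longleftrightarrow> pos X \<subseteq> E \<and> neg X \<subseteq> E \<and> pos X \<inter> neg X = {}"

definition opp :: "'e sset \<Rightarrow> 'e sset" where "opp X = (neg X, pos X)"

definition conformal :: "'e sset \<Rightarrow> 'e sset \<Rightarrow> bool" where
  "conformal X Y \<longleftrightarrow> pos X \<inter> neg Y = {} \<and> neg X \<inter> pos Y = {}"

definition pairwise_conformal :: "'e sset set \<Rightarrow> bool" where
  "pairwise_conformal F \<longleftrightarrow> (\<forall>X\<in>F. \<forall>Y\<in>F. conformal X Y)"

text \<open>Composition of a family of pairwise conformal signed sets (order-independent;
  for conformal sets, iterated composition is the union of positive and negative parts).\<close>
definition compose_family :: "'e sset set \<Rightarrow> 'e sset" where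
  "compose_family F = (\<Union>X\<in>F. pos X, \<Union>X\<in>F. neg X)"

text \<open>Strict total orders on E (given as a relation L, e < f iff (e,f) \<in> L).\<close>
definition strict_total_order_on :: "'e set \<Rightarrow> 'e rel \<Rightarrow> bool" where
  "strict_total_order_on E L \<longleftrightarrow> L \<subseteq> E \<times> E \<and> trans L \<and> irrefl L \<and> total_on E L"

definition strict_partial_order_on :: "'e set \<Rightarrow> 'e rel \<Rightarrow> bool" where
  "strict_partial_order_on E P \<longleftrightarrow> P \<subseteq> E \<times> E \<and> trans P \<and> irrefl P"

text \<open>Signed circuits C(<) of the rank 2 oriented matroid M(<).\<close>
definition circuits_tot :: "'e rel \<Rightarrow> 'e sset set" where
  "circuits_tot L = {({e1, e3}, {e2}) | e1 e2 e3. (e1, e2) \<in> L \<and> (e2, e3) \<in> L}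
                  \<union> {({e2}, {e1, e3}) | e1 e2 e3. (e1, e2) \<in> L \<and> (e2, e3) \<in> L}"

definition vector_tot :: "'e rel \<Rightarrow> 'e sset \<Rightarrow> bool" where
  "vector_tot L X \<longleftrightarrow> (\<exists>F. F \<subseteq> circuits_tot L \<and> pairwise_conformal F \<and> X = compose_family F)"

definition linear_extensions :: "'e set \<Rightarrow> 'e rel \<Rightarrow> 'e rel set" where
  "linear_extensions E P = {L. strict_total_order_on E L \<and> P \<subseteq> L}"

definition circuits_po :: "'e set \<Rightarrow> 'e rel \<Rightarrow> 'e sset set" where
  "circuits_po E P = (\<Inter>L\<in>linear_extensions E P. circuits_tot L)"

text \<open>Directed graphs: finite vertex set V, edge set D \<subseteq> V \<times> V, no loops,
  no antiparallel edges (parallel edges are excluded by using a set).\<close>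
definition digraph :: "'v set \<Rightarrow> ('v \<times> 'v) set \<Rightarrow> bool" where
  "digraph V D \<longleftrightarrow> finite V \<and> D \<subseteq> V \<times> V \<and> (\<forall>u. (u, u) \<notin> D)
      \<and> (\<forall>u w. (u, w) \<in> D \<longrightarrow> (w, u) \<notin> D)"

definition connected_in :: "'v set \<Rightarrow> ('v \<times> 'v) set \<Rightarrow> bool" where
  "connected_in W F \<longleftrightarrow> W \<noteq> {} \<and>
     (\<forall>x\<in>W. \<forall>y\<in>W. (x, y) \<in> ({(a, b). (a, b) \<in> F \<or> (b, a) \<in> F} \<inter> W \<times> W)\<^sup>*)"

definition three_edge_connected :: "'v set \<Rightarrow> ('v \<times> 'v) set \<Rightarrow> bool" where
  "three_edge_connected V D \<longleftrightarrow> (\<forall>X. X \<subseteq> D \<and> card X < 3 \<longrightarrow> connected_in V (D - X))"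

definition directed_cycle :: "('v \<times> 'v) set \<Rightarrow> 'v list \<Rightarrow> bool" where
  "directed_cycle D vs \<longleftrightarrow> length vs \<ge> 2 \<and> distinct vs \<and>
     (\<forall>i < length vs. (vs ! i, vs ! ((i + 1) mod length vs)) \<in> D)"

definition cycle_edges :: "'v list \<Rightarrow> ('v \<times> 'v) set" where
  "cycle_edges vs = {(vs ! i, vs ! ((i + 1) mod length vs)) | i. i < length vs}"

definition totally_cyclic :: "('v \<times> 'v) set \<Rightarrow> bool" where
  "totally_cyclic D \<longleftrightarrow> (\<forall>e\<in>D. \<exists>vs. directed_cycle D vs \<and> e \<in> cycle_edges vs)"

definition signed_cut :: "'v set \<Rightarrow> ('v \<times> 'v) set \<Rightarrow> 'v set \<Rightarrow> ('v \<times> 'v) sset" where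
  "signed_cut V D S = ({(u, w) \<in> D. u \<in> S \<and> w \<notin> S}, {(u, w) \<in> D. w \<in> S \<and> u \<notin> S})"

text \<open>Circuits of the dual graphic oriented matroid M*(G): signed minimal cuts.\<close>
definition cocircuits :: "'v set \<Rightarrow> ('v \<times> 'v) set \<Rightarrow> ('v \<times> 'v) sset set" where
  "cocircuits V D = {signed_cut V D S | S. S \<subseteq> V \<and> connected_in S D \<and> connected_in (V - S) D}"

definition strong_map :: "'v set \<Rightarrow> ('v \<times> 'v) set \<Rightarrow> ('v \<times> 'v) rel \<Rightarrow> bool" where
  "strong_map V D L \<longleftrightarrow> (\<forall>X\<in>cocircuits V D. vector_tot L X)"

definition star_cocircuit :: "('v \<times> 'v) set \<Rightarrow> 'v \<Rightarrow> ('v \<times> 'v) sset" where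
  "star_cocircuit D v = ({(u, w) \<in> D. w = v}, {(u, w) \<in> D. u = v})"

definition twisted_graph ::
  "'v set \<Rightarrow> ('v \<times> 'v) set \<Rightarrow> ('v \<times> 'v) rel \<Rightarrow> ('v \<times> 'v) sset set \<Rightarrow> bool" where
  "twisted_graph V D P A \<longleftrightarrow>
     digraph V D \<and> strict_partial_order_on D P \<and>
     three_edge_connected V D \<and>
     A \<subseteq> circuits_po D P \<and>
     (\<forall>L\<in>linear_extensions D P. strong_map V D L) \<and>
     (\<exists>Av :: 'v \<Rightarrow> ('v \<times> 'v) sset set.
        A = (\<Union>v\<in>V. Av v) \<and>
        (\<forall>v\<in>V. \<forall>w\<in>V. v \<noteq> w \<longrightarrow> Av v \<inter> Av w = {}) \<and>
        (\<forall>v\<in>V. pairwise_conformal (Av v) \<and> compose_family (Av v) = star_cocircuit D v))"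

end

theory Submission
  imports Defs "HOL-Computational_Algebra.Polynomial"
begin

(*
  Let Z_0, ..., Z_(K-1) be the edge sets of the directed cycles, g(x) the number of them through
  the edge x and f(x) = sum of t^i over the Z_i containing x. Both are circulations, so for
  every s the circulation f - s g has zero net flow through every cut and every vertex star X.
  With r = f / g this says that point masses g(x) placed at r(x) and signed by X have vanishing
  total mass and first moment. Three-edge-connectivity makes any two edges distinguishable by a
  directed cycle, so r is injective for generic t, and ordering the edges by r gives a total
  order <. A balanced signed set is the conformal composition of the circuits of M(<) inside
  it, since an element of X+ with all of X- on one side of it would make X one-sided. Taking
  \<prec> to be < itself, which has no other linear extension, gives C(\<prec>) = C(<), and the
  circuits inside the vertex stars form A.
*)

section \<open>Circuits of the rank 2 oriented matroid of a total order\<close>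

lemma pos_Pair [simp]: "pos (P, N) = P" and neg_Pair [simp]: "neg (P, N) = N"
  by (simp_all add: pos_def neg_def)

lemma pos_opp [simp]: "pos (opp X) = neg X" and neg_opp [simp]: "neg (opp X) = pos X"
  by (simp_all add: opp_def)

lemma circuits_totI1: "(e1, e2) \<in> L \<Longrightarrow> (e2, e3) \<in> L \<Longrightarrow> ({e1, e3}, {e2}) \<in> circuits_tot L"
  unfolding circuits_tot_def by blast

lemma circuits_totI2: "(e1, e2) \<in> L \<Longrightarrow> (e2, e3) \<in> L \<Longrightarrow> ({e2}, {e1, e3}) \<in> circuits_tot L"
  unfolding circuits_tot_def by blast

lemma opp_in_circuits_tot: "C \<in> circuits_tot L \<Longrightarrow> opp C \<in> circuits_tot L"
  unfolding circuits_tot_def opp_def by auto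

lemma circuits_tot_converse [simp]: "circuits_tot (L\<inverse>) = circuits_tot L"
  unfolding circuits_tot_def by (auto simp: insert_commute)

lemma pos_circuit_nonempty: "C \<in> circuits_tot L \<Longrightarrow> pos C \<noteq> {}"
  unfolding circuits_tot_def by auto

definition circuits_within :: "'e rel \<Rightarrow> 'e sset \<Rightarrow> 'e sset set" where
  "circuits_within L X = {C \<in> circuits_tot L. pos C \<subseteq> pos X \<and> neg C \<subseteq> neg X}"

lemma circuits_within_converse [simp]: "circuits_within (L\<inverse>) X = circuits_within L X"
  by (simp add: circuits_within_def)

lemma linear_extensions_total_order:
  assumes "strict_total_order_on E L"
  shows "linear_extensions E L = {L}"
proof -
  have "L' = L" if L': "strict_total_order_on E L'" "L \<subseteq> L'" for L'
  proof (rule ccontr)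
    assume "L' \<noteq> L"
    then obtain x y where xy: "(x, y) \<in> L'" "(x, y) \<notin> L" using L'(2) by auto
    with L' have "x \<in> E" "y \<in> E" "x \<noteq> y"
      unfolding strict_total_order_on_def irrefl_def by auto
    with assms xy have "(y, x) \<in> L'"
      using L'(2) unfolding strict_total_order_on_def total_on_def by blast
    with xy L'(1) show False
      unfolding strict_total_order_on_def trans_def irrefl_def by blast
  qed
  with assms show ?thesis unfolding linear_extensions_def by auto
qed

lemma circuits_po_total_order:
  "strict_total_order_on E L \<Longrightarrow> circuits_po E L = circuits_tot L"
  by (simp add: circuits_po_def linear_extensions_total_order)

lemma strict_total_order_by_injective:
  fixes r :: "'e \<Rightarrow> 'a::linorder"
  assumes "inj_on r E"
  shows "strict_total_order_on E {(x, y). x \<in> E \<and> y \<in> E \<and> r x < r y}"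
proof -
  have "r x \<noteq> r y" if "x \<in> E" "y \<in> E" "x \<noteq> y" for x y
    using assms that by (auto dest: inj_onD)
  then show ?thesis
    unfolding strict_total_order_on_def trans_def irrefl_def total_on_def
    by (auto simp: neq_iff)
qed

section \<open>Balanced signed sets are composed of circuits\<close>

text \<open>Think of point masses \<open>w x\<close> at positions \<open>r x\<close>, counted positively on \<open>pos X\<close> and
  negatively on \<open>neg X\<close>: \<open>X\<close> is balanced if total mass and first moment vanish.\<close>
definition balanced :: "('e \<Rightarrow> real) \<Rightarrow> ('e \<Rightarrow> real) \<Rightarrow> 'e sset \<Rightarrow> bool" where
  "balanced w r X \<longleftrightarrow> (\<forall>s. (\<Sum>x\<in>pos X. w x * (r x - s)) = (\<Sum>x\<in>neg X. w x * (r x - s)))"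

lemma balanced_opp: "balanced w r X \<Longrightarrow> balanced w r (opp X)"
  unfolding balanced_def by simp

lemma balanced_uminus:
  assumes "balanced w r X"
  shows "balanced w (\<lambda>x. - r x) X"
  unfolding balanced_def
proof
  fix s
  have "w x * (- r x - s) = - (w x * (r x - - s))" for x
    by (simp add: algebra_simps)
  then have "(\<Sum>x\<in>A. w x * (- r x - s)) = - (\<Sum>x\<in>A. w x * (r x - - s))" for A
    by (simp add: sum_negf)
  then show "(\<Sum>x\<in>pos X. w x * (- r x - s)) = (\<Sum>x\<in>neg X. w x * (- r x - s))"
    using assms unfolding balanced_def by metis
qed

lemma balanced_one_sided:
  assumes bal: "balanced w r X" and fin: "finite (pos X)" "finite (neg X)"
    and w: "\<And>x. x \<in> pos X \<union> neg X \<Longrightarrow> 0 < w x"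
    and above: "\<forall>x\<in>pos X. s \<le> r x" and below: "\<forall>x\<in>neg X. r x \<le> s"
    and x: "x \<in> pos X \<union> neg X"
  shows "r x = s"
proof -
  have P: "\<forall>x\<in>pos X. 0 \<le> w x * (r x - s)" and N: "\<forall>x\<in>neg X. 0 \<le> w x * (s - r x)"
    using w above below by (auto intro!: mult_nonneg_nonneg less_imp_le[OF w])
  have "(\<Sum>x\<in>neg X. w x * (s - r x)) = - (\<Sum>x\<in>neg X. w x * (r x - s))"
    by (simp add: sum_negf[symmetric] algebra_simps)
  with bal have "(\<Sum>x\<in>pos X. w x * (r x - s)) + (\<Sum>x\<in>neg X. w x * (s - r x)) = 0"
    unfolding balanced_def by simp
  with P N have "(\<Sum>x\<in>pos X. w x * (r x - s)) = 0" "(\<Sum>x\<in>neg X. w x * (s - r x)) = 0"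
    by (simp_all add: add_nonneg_eq_0_iff sum_nonneg)
  with P N fin have "\<forall>x\<in>pos X. w x * (r x - s) = 0" "\<forall>x\<in>neg X. w x * (s - r x) = 0"
    by (simp_all add: sum_nonneg_eq_0_iff)
  moreover have "w x \<noteq> 0"
    using w[OF x] by simp
  ultimately show ?thesis
    using x by auto
qed

text \<open>If all of \<open>neg X\<close> lies above \<open>e \<in> pos X\<close>, the lowest element of \<open>neg X\<close> must lie
  below some element of \<open>pos X\<close>, since otherwise \<open>X\<close> would be one-sided.\<close>
lemma circuit_through_pos_one_sided:
  assumes bal: "balanced w r X" and fin: "finite (pos X)" "finite (neg X)"
    and w: "\<And>x. x \<in> pos X \<union> neg X \<Longrightarrow> 0 < w x"
    and L: "\<And>x y. x \<in> pos X \<union> neg X \<Longrightarrow> y \<in> pos X \<union> neg X \<Longrightarrow> r x < r y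
      \<Longrightarrow> (x, y) \<in> L"
    and e: "e \<in> pos X" and above: "\<forall>n\<in>neg X. r e < r n"
  shows "\<exists>C\<in>circuits_within L X. e \<in> pos C"
proof -
  have "neg X \<noteq> {}"
  proof
    assume empty: "neg X = {}"
    define s where "s = Min (r ` pos X)"
    have "s \<le> r x" if "x \<in> pos X" for x
      using fin that unfolding s_def by (intro Min_le) auto
    then have "\<forall>x\<in>pos X. s - d \<le> r x" if "d \<ge> 0" for d :: real
      using that by force
    then have "r e = s - d" if "d \<ge> 0" for d :: real
      using balanced_one_sided[OF bal fin w _ _ e[THEN UnI1]] empty that by simp
    from this[of 0] this[of 1] show False by simp
  qed
  then obtain n where n: "n \<in> neg X" and n_min: "\<forall>m\<in>neg X. r n \<le> r m"
    using fin(2) by (metis arg_min_if_finite not_le)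
  show ?thesis
  proof (cases "\<exists>p\<in>pos X. r n < r p")
    case True
    then obtain p where p: "p \<in> pos X" "r n < r p" by blast
    have "({e, p}, {n}) \<in> circuits_tot L"
      using n p e above by (intro circuits_totI1 L) auto
    with n p e show ?thesis
      unfolding circuits_within_def by (intro bexI[of _ "({e, p}, {n})"]) auto
  next
    case False
    then have "\<forall>x\<in>pos (opp X). r n \<le> r x" "\<forall>x\<in>neg (opp X). r x \<le> r n"
      using n_min by (auto simp: not_less)
    from balanced_one_sided[OF balanced_opp[OF bal] _ _ _ this] fin w e
    have "r e = r n" by (simp add: Un_commute)
    with above n show ?thesis by fastforce
  qed
qed

lemma circuit_through_pos:
  assumes bal: "balanced w r X" and fin: "finite (pos X)" "finite (neg X)"
    and disj: "pos X \<inter> neg X = {}" and w: "\<And>x. x \<in> pos X \<union> neg X \<Longrightarrow> 0 < w x"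
    and inj: "inj_on r (pos X \<union> neg X)"
    and L: "\<And>x y. x \<in> pos X \<union> neg X \<Longrightarrow> y \<in> pos X \<union> neg X \<Longrightarrow> r x < r y
      \<Longrightarrow> (x, y) \<in> L"
    and e: "e \<in> pos X"
  shows "\<exists>C\<in>circuits_within L X. e \<in> pos C"
proof -
  have ne: "r n \<noteq> r e" if "n \<in> neg X" for n
    using that e disj inj unfolding inj_on_def by blast
  consider "\<forall>n\<in>neg X. r e < r n" | "\<forall>n\<in>neg X. r n < r e"
    | n1 n2 where "n1 \<in> neg X" "n2 \<in> neg X" "r n1 < r e" "r e < r n2"
    using ne by (meson linorder_neqE_linordered_idom)
  then show ?thesis
  proof cases
    case 1
    from circuit_through_pos_one_sided[OF bal fin w L e this] show ?thesis by blast
  next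
    case 2
    have "(x, y) \<in> L\<inverse>" if "x \<in> pos X \<union> neg X" "y \<in> pos X \<union> neg X" "- r x < - r y" for x y
      using L that by simp
    from circuit_through_pos_one_sided[OF balanced_uminus[OF bal] fin w this e] 2
    show ?thesis by simp
  next
    case 3
    then have "({e}, {n1, n2}) \<in> circuits_tot L"
      using e by (intro circuits_totI2 L) auto
    with 3 e show ?thesis
      unfolding circuits_within_def by (intro bexI[of _ "({e}, {n1, n2})"]) auto
  qed
qed

lemma compose_circuits_within:
  assumes bal: "balanced w r X" and fin: "finite (pos X)" "finite (neg X)"
    and disj: "pos X \<inter> neg X = {}" and w: "\<And>x. x \<in> pos X \<union> neg X \<Longrightarrow> 0 < w x"
    and inj: "inj_on r (pos X \<union> neg X)"
    and L: "\<And>x y. x \<in> pos X \<union> neg X \<Longrightarrow> y \<in> pos X \<union> neg X \<Longrightarrow> r x < r y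
      \<Longrightarrow> (x, y) \<in> L"
  shows "pairwise_conformal (circuits_within L X) \<and> compose_family (circuits_within L X) = X"
proof (intro conjI)
  show "pairwise_conformal (circuits_within L X)"
    using disj unfolding pairwise_conformal_def conformal_def circuits_within_def by blast
  have "pos X \<subseteq> (\<Union>C\<in>circuits_within L X. pos C)"
    using circuit_through_pos[OF assms] by blast
  moreover have "neg X \<subseteq> (\<Union>C\<in>circuits_within L X. neg C)"
  proof
    fix e assume "e \<in> neg X"
    have "finite (pos (opp X))" "finite (neg (opp X))" "pos (opp X) \<inter> neg (opp X) = {}"
      "inj_on r (pos (opp X) \<union> neg (opp X))"
      using fin disj inj by (auto simp: Un_commute)
    moreover have "0 < w x" if "x \<in> pos (opp X) \<union> neg (opp X)" for x
      using w that by auto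
    moreover have "(x, y) \<in> L" if "x \<in> pos (opp X) \<union> neg (opp X)"
      "y \<in> pos (opp X) \<union> neg (opp X)" "r x < r y" for x y
      using L that by auto
    ultimately have "\<exists>C\<in>circuits_within L (opp X). e \<in> pos C"
      using \<open>e \<in> neg X\<close> by (intro circuit_through_pos[OF balanced_opp[OF bal]]) simp_all
    then obtain C where "C \<in> circuits_within L (opp X)" "e \<in> pos C"
      by blast
    then have "opp C \<in> circuits_within L X" "e \<in> neg (opp C)"
      unfolding circuits_within_def by (auto intro: opp_in_circuits_tot)
    then show "e \<in> (\<Union>C\<in>circuits_within L X. neg C)" by blast
  qed
  ultimately show "compose_family (circuits_within L X) = X"
    unfolding compose_family_def circuits_within_def pos_def neg_def by (simp add: prod_eq_iff) blast
qed

section \<open>Circulations\<close>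

lemma pos_star_cocircuit [simp]: "pos (star_cocircuit D v) = {x \<in> D. snd x = v}"
  and neg_star_cocircuit [simp]: "neg (star_cocircuit D v) = {x \<in> D. fst x = v}"
  by (auto simp: star_cocircuit_def)

lemma pos_signed_cut [simp]: "pos (signed_cut V D S) = {x \<in> D. fst x \<in> S \<and> snd x \<notin> S}"
  and neg_signed_cut [simp]: "neg (signed_cut V D S) = {x \<in> D. snd x \<in> S \<and> fst x \<notin> S}"
  by (auto simp: signed_cut_def)

definition circulation :: "('v \<times> 'v) set \<Rightarrow> ('v \<times> 'v \<Rightarrow> real) \<Rightarrow> bool" where
  "circulation D h \<longleftrightarrow> (\<forall>v. sum h (pos (star_cocircuit D v)) = sum h (neg (star_cocircuit D v)))"

lemma sum_group_preimage:
  assumes "finite A" "finite S"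
  shows "(\<Sum>v\<in>S. sum h {x \<in> A. g x = v}) = sum h {x \<in> A. g x \<in> S}"
proof -
  have "sum h {x \<in> A. g x \<in> S} = (\<Sum>v\<in>S. sum h {x \<in> {x \<in> A. g x \<in> S}. g x = v})"
    using assms by (intro sum.group[symmetric]) auto
  also have "\<dots> = (\<Sum>v\<in>S. sum h {x \<in> A. g x = v})"
    by (intro sum.cong refl arg_cong[where f = "sum h"]) auto
  finally show ?thesis ..
qed

lemma circulation_cut_balance:
  assumes h: "circulation D h" and fin: "finite D" "finite S"
  shows "sum h (pos (signed_cut V D S)) = sum h (neg (signed_cut V D S))"
proof -
  define inner where "inner = {x \<in> D. fst x \<in> S \<and> snd x \<in> S}"
  have "sum h inner + sum h (neg (signed_cut V D S)) = sum h {x \<in> D. snd x \<in> S}"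
    using fin(1) unfolding inner_def
    by (subst sum.union_disjoint[symmetric]) (auto intro!: arg_cong[where f = "sum h"])
  also have "\<dots> = (\<Sum>v\<in>S. sum h {x \<in> D. snd x = v})"
    using fin by (simp add: sum_group_preimage)
  also have "\<dots> = (\<Sum>v\<in>S. sum h {x \<in> D. fst x = v})"
    using h unfolding circulation_def by simp
  also have "\<dots> = sum h {x \<in> D. fst x \<in> S}"
    using fin by (simp add: sum_group_preimage)
  also have "\<dots> = sum h inner + sum h (pos (signed_cut V D S))"
    using fin(1) unfolding inner_def
    by (subst sum.union_disjoint[symmetric]) (auto intro!: arg_cong[where f = "sum h"])
  finally show ?thesis by simp
qed

lemma circulation_lincomb:
  "circulation D f \<Longrightarrow> circulation D g \<Longrightarrow> circulation D (\<lambda>x. a * f x + b * g x)"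
  unfolding circulation_def by (simp add: sum.distrib sum_distrib_left[symmetric])

lemma circulation_sum:
  assumes "\<And>i. i \<in> I \<Longrightarrow> circulation D (h i)"
  shows "circulation D (\<lambda>x. \<Sum>i\<in>I. a i * h i x)"
  unfolding circulation_def
proof
  fix v
  have "(\<Sum>x\<in>pos (star_cocircuit D v). \<Sum>i\<in>I. a i * h i x)
      = (\<Sum>i\<in>I. a i * sum (h i) (pos (star_cocircuit D v)))"
    by (subst sum.swap) (simp add: sum_distrib_left)
  also have "\<dots> = (\<Sum>i\<in>I. a i * sum (h i) (neg (star_cocircuit D v)))"
    using assms unfolding circulation_def by simp
  also have "\<dots> = (\<Sum>x\<in>neg (star_cocircuit D v). \<Sum>i\<in>I. a i * h i x)"
    by (subst sum.swap) (simp add: sum_distrib_left)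
  finally show "(\<Sum>x\<in>pos (star_cocircuit D v). \<Sum>i\<in>I. a i * h i x)
      = (\<Sum>x\<in>neg (star_cocircuit D v). \<Sum>i\<in>I. a i * h i x)" .
qed

lemma sum_rotate:
  fixes f :: "nat \<Rightarrow> 'a::comm_monoid_add"
  assumes "0 < n"
  shows "(\<Sum>i<n. f (Suc i mod n)) = (\<Sum>i<n. f i)"
proof -
  obtain m where n: "n = Suc m" using assms by (cases n) auto
  have "(\<Sum>i<Suc m. f (Suc i mod Suc m)) = (\<Sum>i<m. f (Suc i)) + f 0"
    by (simp add: sum.lessThan_Suc)
  also have "\<dots> = (\<Sum>i<Suc m. f i)"
    unfolding sum.lessThan_Suc_shift by (simp add: add.commute)
  finally show ?thesis using n by simp
qed

lemma circulation_directed_cycle: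
  assumes cycle: "directed_cycle D vs" and fin: "finite D"
  shows "circulation D (\<lambda>x. of_bool (x \<in> cycle_edges vs))"
proof -
  let ?n = "length vs"
  define edge where "edge i = (vs ! i, vs ! (Suc i mod ?n))" for i
  have edges: "cycle_edges vs = edge ` {..<?n}"
    unfolding cycle_edges_def edge_def by auto
  have sub: "cycle_edges vs \<subseteq> D" and inj: "inj_on edge {..<?n}" and "0 < ?n"
    using cycle unfolding edges edge_def directed_cycle_def inj_on_def
    by (auto simp: nth_eq_iff_index_eq)
  have count: "(\<Sum>x\<in>{x \<in> D. P x}. of_bool (x \<in> cycle_edges vs)) = (\<Sum>i<?n. of_bool (P (edge i)) :: real)"
    for P
  proof -
    have "{x \<in> {x \<in> D. P x}. x \<in> cycle_edges vs} = {x \<in> cycle_edges vs. P x}"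
      using sub by auto
    then have "(\<Sum>x\<in>{x \<in> D. P x}. of_bool (x \<in> cycle_edges vs)) = (\<Sum>x\<in>cycle_edges vs. of_bool (P x) :: real)"
      using fin sub finite_subset[OF sub fin] by simp (rule arg_cong[where f = card], blast)
    also have "\<dots> = (\<Sum>i<?n. of_bool (P (edge i)))"
      unfolding edges by (simp add: sum.reindex[OF inj])
    finally show ?thesis .
  qed
  show ?thesis
    unfolding circulation_def pos_star_cocircuit neg_star_cocircuit count
    using sum_rotate[OF \<open>0 < ?n\<close>, of "\<lambda>i. of_bool (vs ! i = _) :: real"] by (simp add: edge_def)
qed

section \<open>Directed cycles separate edges\<close>

lemma rtrancl_imp_distinct_path:
  assumes "(x, y) \<in> R\<^sup>*"
  shows "\<exists>vs. vs \<noteq> [] \<and> hd vs = x \<and> last vs = y \<and> distinct vs \<and>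
    (\<forall>i. Suc i < length vs \<longrightarrow> (vs ! i, vs ! Suc i) \<in> R)"
  using assms
proof (induction rule: rtrancl_induct)
  case base
  show ?case by (intro exI[of _ "[x]"]) auto
next
  case (step y z)
  then obtain vs where vs: "vs \<noteq> []" "hd vs = x" "last vs = y" "distinct vs"
    and steps: "\<forall>i. Suc i < length vs \<longrightarrow> (vs ! i, vs ! Suc i) \<in> R"
    by blast
  show ?case
  proof (cases "z \<in> set vs")
    case True
    then obtain k where k: "k < length vs" "vs ! k = z" by (meson in_set_conv_nth)
    let ?ws = "take (Suc k) vs"
    have "hd ?ws = x" using vs by (simp add: hd_take)
    moreover have "last ?ws = z" using k by (simp add: take_Suc_conv_app_nth)
    moreover have "distinct ?ws" using vs by simp
    moreover have "\<forall>i. Suc i < length ?ws \<longrightarrow> (?ws ! i, ?ws ! Suc i) \<in> R"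
      using steps k by auto
    ultimately show ?thesis
      using vs(1) by (intro exI[of _ ?ws]) auto
  next
    case False
    have "(vs @ [z]) ! i = vs ! i" if "i < length vs" for i
      using that by (simp add: nth_append)
    moreover have "vs ! i = y" if "Suc i = length vs" for i
      using vs that by (metis diff_Suc_1 last_conv_nth)
    ultimately have "\<forall>i. Suc i < length (vs @ [z]) \<longrightarrow> ((vs @ [z]) ! i, (vs @ [z]) ! Suc i) \<in> R"
      using steps step.hyps(2) by (auto simp: nth_append less_Suc_eq)
    with vs False show ?thesis
      by (intro exI[of _ "vs @ [z]"]) auto
  qed
qed

lemma directed_cycle_closing_path:
  assumes path: "(b, a) \<in> (D - F)\<^sup>*" and e: "(a, b) \<in> D" "(a, b) \<notin> F" and "a \<noteq> b"
  shows "\<exists>vs. directed_cycle D vs \<and> (a, b) \<in> cycle_edges vs \<and> cycle_edges vs \<inter> F = {}"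
proof -
  obtain vs where vs: "vs \<noteq> []" "hd vs = b" "last vs = a" "distinct vs"
    and steps: "\<forall>i. Suc i < length vs \<longrightarrow> (vs ! i, vs ! Suc i) \<in> D - F"
    using rtrancl_imp_distinct_path[OF path] by blast
  let ?n = "length vs"
  have "?n \<noteq> 1"
    using vs \<open>a \<noteq> b\<close> by (auto simp: length_Suc_conv)
  moreover have "?n \<noteq> 0"
    using vs by simp
  ultimately have n: "2 \<le> ?n"
    by linarith
  have first: "vs ! 0 = b" and last: "vs ! (?n - 1) = a"
    using vs by (simp_all add: hd_conv_nth last_conv_nth)
  have edge: "(vs ! i, vs ! (Suc i mod ?n)) \<in> (D - F) \<union> {(a, b)}" if "i < ?n" for i
  proof (cases "Suc i < ?n")
    case True
    with steps show ?thesis by simp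
  next
    case False
    with that have "Suc i = ?n" by simp
    then have "i = ?n - 1" "Suc i mod ?n = 0" by auto
    with first last show ?thesis by simp
  qed
  have "Suc (?n - 1) = ?n"
    using n by simp
  then have "(a, b) = (vs ! (?n - 1), vs ! ((?n - 1 + 1) mod ?n))"
    using first last by simp
  then have "(a, b) \<in> cycle_edges vs"
    unfolding cycle_edges_def using n by (intro CollectI exI[of _ "?n - 1"]) simp
  moreover have "cycle_edges vs \<subseteq> (D - F) \<union> {(a, b)}"
    using edge unfolding cycle_edges_def by auto
  moreover have "directed_cycle D vs"
    unfolding directed_cycle_def using n vs(4) edge e(1) by auto
  ultimately show ?thesis
    using e(2) by blast
qed

lemma rtrancl_crossing_edge:
  assumes "(x, y) \<in> Q\<^sup>*" "x \<in> S" "y \<notin> S"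
  shows "\<exists>u w. (u, w) \<in> Q \<and> u \<in> S \<and> w \<notin> S"
  using assms by (induction rule: rtrancl_induct) auto

lemma three_edge_connected_crossing_edge:
  assumes tec: "three_edge_connected V D" and "e \<in> D" "f \<in> D"
    and "b \<in> S" "a \<notin> S" "a \<in> V" "b \<in> V"
  shows "\<exists>x\<in>D - {e, f}. (fst x \<in> S) \<noteq> (snd x \<in> S)"
proof -
  let ?Q = "{(x, y). (x, y) \<in> D - {e, f} \<or> (y, x) \<in> D - {e, f}} \<inter> V \<times> V"
  have "connected_in V (D - {e, f})"
    using assms unfolding three_edge_connected_def by (simp add: card_insert_if)
  with assms have "(b, a) \<in> ?Q\<^sup>*"
    unfolding connected_in_def by blast
  from rtrancl_crossing_edge[OF this \<open>b \<in> S\<close> \<open>a \<notin> S\<close>]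
  obtain u w where "(u, w) \<in> ?Q" "u \<in> S" "w \<notin> S" by blast
  then consider "(u, w) \<in> D - {e, f}" | "(w, u) \<in> D - {e, f}" by blast
  then show ?thesis
  proof cases
    case 1
    with \<open>u \<in> S\<close> \<open>w \<notin> S\<close> show ?thesis by (intro bexI[of _ "(u, w)"]) simp_all
  next
    case 2
    with \<open>u \<in> S\<close> \<open>w \<notin> S\<close> show ?thesis by (intro bexI[of _ "(w, u)"]) simp_all
  qed
qed

text \<open>A directed cycle leaves \<open>S\<close> as often as it enters it.\<close>
lemma directed_cycle_crossing_cut:
  assumes cycle: "directed_cycle D vs" and fin: "finite D" "finite S"
    and leaving: "\<And>x. x \<in> D \<Longrightarrow> fst x \<in> S \<Longrightarrow> snd x \<notin> S \<Longrightarrow> x = f"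
    and e: "e \<in> D" "snd e \<in> S" "fst e \<notin> S" and g: "g \<in> D" "snd g \<in> S" "fst g \<notin> S"
    and "g \<in> cycle_edges vs" "e \<noteq> g"
  shows "f \<in> cycle_edges vs \<and> e \<notin> cycle_edges vs"
proof -
  let ?count = "\<lambda>A. card (A \<inter> cycle_edges vs)"
  have "real (?count (pos (signed_cut V D S))) = real (?count (neg (signed_cut V D S)))"
    using circulation_cut_balance[OF circulation_directed_cycle[OF cycle fin(1)] fin] fin(1)
    by simp
  moreover have "?count (pos (signed_cut V D S)) \<le> ?count {f}"
    using leaving by (intro card_mono) auto
  moreover have "?count {e, g} \<le> ?count (neg (signed_cut V D S))"
    using fin e g by (intro card_mono) auto
  ultimately have "?count {e, g} \<le> ?count {f}"
    by linarith
  with \<open>g \<in> cycle_edges vs\<close> \<open>e \<noteq> g\<close> show ?thesis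
    by (cases "e \<in> cycle_edges vs"; cases "f \<in> cycle_edges vs") auto
qed

text \<open>If every directed cycle through \<open>e = (a, b)\<close> also passed through \<open>f\<close> and conversely,
  the set \<open>S\<close> of vertices reachable from \<open>b\<close> without \<open>f\<close> would miss \<open>a\<close> and be left only
  by \<open>f\<close>. By three-edge-connectivity a third edge enters \<open>S\<close>, and a directed cycle through it
  contains \<open>f\<close> but not \<open>e\<close>.\<close>
lemma directed_cycle_separating_edges:
  assumes dg: "digraph V D" and tc: "totally_cyclic D" and tec: "three_edge_connected V D"
    and e: "e \<in> D" and f: "f \<in> D" and "e \<noteq> f"
  shows "\<exists>vs. directed_cycle D vs \<and> (e \<in> cycle_edges vs \<longleftrightarrow> f \<notin> cycle_edges vs)"
proof (rule ccontr)
  assume "\<not> ?thesis"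
  then have same: "e \<in> cycle_edges vs \<longleftrightarrow> f \<in> cycle_edges vs" if "directed_cycle D vs" for vs
    using that by blast
  obtain a b where ab: "e = (a, b)" by fastforce
  have finD: "finite D" and "a \<noteq> b" "a \<in> V" "b \<in> V"
    using dg e finite_subset[of D "V \<times> V"] unfolding digraph_def ab by auto
  define S where "S = (D - {f})\<^sup>* `` {b}"
  have "b \<in> S" and finS: "finite S"
    unfolding S_def using finD by auto
  have "a \<notin> S"
  proof
    assume "a \<in> S"
    then have "(b, a) \<in> (D - {f})\<^sup>*" unfolding S_def by simp
    from directed_cycle_closing_path[OF this] e \<open>e \<noteq> f\<close> \<open>a \<noteq> b\<close> same show False
      unfolding ab by blast
  qed
  have leaving: "x = f" if "x \<in> D" "fst x \<in> S" "snd x \<notin> S" for x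
  proof (rule ccontr)
    assume "x \<noteq> f"
    with that have "(b, snd x) \<in> (D - {f})\<^sup>*"
      unfolding S_def by (auto intro: rtrancl_into_rtrancl[where b = "fst x"])
    with that show False unfolding S_def by simp
  qed
  from three_edge_connected_crossing_edge[OF tec e f \<open>b \<in> S\<close> \<open>a \<notin> S\<close> \<open>a \<in> V\<close> \<open>b \<in> V\<close>]
  obtain g where g: "g \<in> D" "g \<noteq> e" "g \<noteq> f" and crossing: "(fst g \<in> S) \<noteq> (snd g \<in> S)"
    by blast
  have "fst g \<notin> S"
  proof
    assume "fst g \<in> S"
    with crossing have "snd g \<notin> S" by simp
    with leaving[OF g(1) \<open>fst g \<in> S\<close>] g(3) show False by simp
  qed
  with crossing have "snd g \<in> S" by simp
  from tc g(1) obtain vs where cycle: "directed_cycle D vs" and "g \<in> cycle_edges vs"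
    unfolding totally_cyclic_def by blast
  have "snd e \<in> S" "fst e \<notin> S"
    using \<open>b \<in> S\<close> \<open>a \<notin> S\<close> unfolding ab by simp_all
  from directed_cycle_crossing_cut[OF cycle finD finS leaving e this g(1) \<open>snd g \<in> S\<close> \<open>fst g \<notin> S\<close>
      \<open>g \<in> cycle_edges vs\<close>] g(2) same[OF cycle]
  show False by auto
qed

section \<open>Twisting\<close>

text \<open>The polynomials \<open>\<Sum>i<K. (c i x * g y - c i y * g x) * t ^ i\<close> are nonzero, so a
  generic \<open>t\<close> avoids all their roots.\<close>
lemma exists_injective_polynomial_ratio:
  fixes c :: "nat \<Rightarrow> 'a \<Rightarrow> real" and g :: "'a \<Rightarrow> real"
  assumes fin: "finite E" and g: "\<And>x. x \<in> E \<Longrightarrow> g x \<noteq> 0"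
    and sep: "\<And>x y. x \<in> E \<Longrightarrow> y \<in> E \<Longrightarrow> x \<noteq> y
      \<Longrightarrow> \<exists>i<K. c i x * g y \<noteq> c i y * g x"
  shows "\<exists>t. inj_on (\<lambda>x. (\<Sum>i<K. t ^ i * c i x) / g x) E"
proof -
  define p where "p x y = (\<Sum>i<K. monom (c i x * g y - c i y * g x) i)" for x y
  have poly_p: "poly (p x y) t = (\<Sum>i<K. t ^ i * c i x) * g y - (\<Sum>i<K. t ^ i * c i y) * g x" for x y t
    unfolding p_def by (simp add: poly_sum poly_monom algebra_simps sum_distrib_left sum_subtractf)
  have "p x y \<noteq> 0" if "x \<in> E" "y \<in> E" "x \<noteq> y" for x y
  proof -
    from sep[OF that] obtain i where "i < K" "c i x * g y \<noteq> c i y * g x" by blast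
    then have "coeff (p x y) i \<noteq> 0" unfolding p_def by (simp add: coeff_sum coeff_monom)
    then show ?thesis by auto
  qed
  then have "finite (\<Union>x\<in>E. \<Union>y\<in>E - {x}. {t. poly (p x y) t = 0})"
    using fin by (intro finite_UN_I poly_roots_finite) auto
  then obtain t where t: "t \<notin> (\<Union>x\<in>E. \<Union>y\<in>E - {x}. {t. poly (p x y) t = 0})"
    using ex_new_if_finite[OF infinite_UNIV_char_0] by blast
  show ?thesis
  proof (intro exI inj_onI)
    fix x y assume "x \<in> E" "y \<in> E"
      and "(\<Sum>i<K. t ^ i * c i x) / g x = (\<Sum>i<K. t ^ i * c i y) / g y"
    with g have "poly (p x y) t = 0" by (simp add: poly_p frac_eq_eq)
    with t \<open>x \<in> E\<close> \<open>y \<in> E\<close> show "x = y" by blast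
  qed
qed

lemma sum_indicators_pos:
  assumes "Z \<in> set Zs" "x \<in> Z"
  shows "0 < (\<Sum>i<length Zs. of_bool (x \<in> Zs ! i) :: real)"
proof -
  from assms(1) obtain i where "i < length Zs" "Zs ! i = Z"
    by (metis in_set_conv_nth)
  with assms(2) have "i < length Zs" "x \<in> Zs ! i"
    by simp_all
  then have "of_bool (x \<in> Zs ! i) \<le> (\<Sum>i<length Zs. of_bool (x \<in> Zs ! i) :: real)"
    by (intro member_le_sum) auto
  with \<open>x \<in> Zs ! i\<close> show ?thesis by simp
qed

lemma exists_injective_ratio_of_indicators:
  fixes Zs :: "'a set list"
  assumes fin: "finite E" and cover: "\<And>x. x \<in> E \<Longrightarrow> \<exists>Z\<in>set Zs. x \<in> Z"
    and sep: "\<And>x y. x \<in> E \<Longrightarrow> y \<in> E \<Longrightarrow> x \<noteq> y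
      \<Longrightarrow> \<exists>Z\<in>set Zs. x \<in> Z \<longleftrightarrow> y \<notin> Z"
  shows "\<exists>t :: real. inj_on (\<lambda>x. (\<Sum>i<length Zs. t ^ i * of_bool (x \<in> Zs ! i))
    / (\<Sum>i<length Zs. of_bool (x \<in> Zs ! i))) E"
proof -
  define c where "c i x = (of_bool (x \<in> Zs ! i) :: real)" for i x
  define g where "g x = (\<Sum>i<length Zs. c i x)" for x
  have g_pos: "0 < g x" if "x \<in> E" for x
  proof -
    from cover[OF that] obtain Z where "Z \<in> set Zs" "x \<in> Z" ..
    from sum_indicators_pos[OF this] show ?thesis
      unfolding g_def c_def .
  qed
  have g_nonzero: "g x \<noteq> 0" if "x \<in> E" for x
    using g_pos[OF that] by simp
  have separating: "\<exists>i<length Zs. c i x * g y \<noteq> c i y * g x" if "x \<in> E" "y \<in> E" "x \<noteq> y" for x y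
  proof -
    from sep[OF that] obtain Z where "Z \<in> set Zs" and Z: "x \<in> Z \<longleftrightarrow> y \<notin> Z" ..
    then obtain i where "i < length Zs" "Zs ! i = Z"
      by (metis in_set_conv_nth)
    with Z have "i < length Zs" "x \<in> Zs ! i \<longleftrightarrow> y \<notin> Zs ! i"
      by simp_all
    with g_pos[OF that(1)] g_pos[OF that(2)] show ?thesis
      unfolding c_def by (intro exI[of _ i]) auto
  qed
  have "\<exists>t. inj_on (\<lambda>x. (\<Sum>i<length Zs. t ^ i * c i x) / g x) E"
    using fin g_nonzero separating by (rule exists_injective_polynomial_ratio)
  then show ?thesis
    unfolding g_def c_def .
qed

locale circulation_ratio =
  fixes V :: "'v set" and D :: "('v \<times> 'v) set" and f g :: "'v \<times> 'v \<Rightarrow> real"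
  assumes digraph: "digraph V D"
    and circulation_f: "circulation D f" and circulation_g: "circulation D g"
    and g_pos: "\<And>x. x \<in> D \<Longrightarrow> 0 < g x" and inj: "inj_on (\<lambda>x. f x / g x) D"
begin

definition ratio_order :: "('v \<times> 'v) rel" where
  "ratio_order = {(x, y). x \<in> D \<and> y \<in> D \<and> f x / g x < f y / g y}"

lemma finite_edges: "finite D"
  using digraph unfolding digraph_def by (auto intro: finite_subset)

lemma strict_total_order_ratio_order: "strict_total_order_on D ratio_order"
  unfolding ratio_order_def by (rule strict_total_order_by_injective[OF inj])

lemma compose_circuits_within_ratio_order:
  assumes X: "pos X \<subseteq> D" "neg X \<subseteq> D" "pos X \<inter> neg X = {}"
    and orth: "\<And>h. circulation D h \<Longrightarrow> sum h (pos X) = sum h (neg X)"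
  shows "pairwise_conformal (circuits_within ratio_order X)
    \<and> compose_family (circuits_within ratio_order X) = X"
  unfolding ratio_order_def
proof (rule compose_circuits_within)
  show "balanced g (\<lambda>x. f x / g x) X"
    unfolding balanced_def
  proof
    fix s
    have "(\<Sum>x\<in>A. g x * (f x / g x - s)) = (\<Sum>x\<in>A. f x - s * g x)" if "A \<subseteq> D" for A
      using g_pos that by (intro sum.cong refl) (force simp: field_simps)
    moreover have "sum (\<lambda>x. 1 * f x + - s * g x) (pos X) = sum (\<lambda>x. 1 * f x + - s * g x) (neg X)"
      by (intro orth circulation_lincomb circulation_f circulation_g)
    ultimately show "(\<Sum>x\<in>pos X. g x * (f x / g x - s)) = (\<Sum>x\<in>neg X. g x * (f x / g x - s))"
      using X by simp
  qed
qed (use X finite_edges g_pos inj in \<open>auto intro: finite_subset inj_on_subset\<close>)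

lemma strong_map_ratio_order: "strong_map V D ratio_order"
  unfolding strong_map_def vector_tot_def
proof
  fix X assume "X \<in> cocircuits V D"
  then obtain S where X: "X = signed_cut V D S" and "S \<subseteq> V"
    unfolding cocircuits_def by blast
  with digraph have "finite S"
    unfolding digraph_def by (auto intro: finite_subset)
  then have "sum h (pos X) = sum h (neg X)" if "circulation D h" for h
    using circulation_cut_balance[OF that finite_edges] X by blast
  with X have "pairwise_conformal (circuits_within ratio_order X)
      \<and> compose_family (circuits_within ratio_order X) = X"
    by (intro compose_circuits_within_ratio_order) auto
  moreover have "circuits_within ratio_order X \<subseteq> circuits_tot ratio_order"
    unfolding circuits_within_def by blast
  ultimately show "\<exists>F\<subseteq>circuits_tot ratio_order. pairwise_conformal F \<and> X = compose_family F"
    by metis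
qed

lemma twisted_graph_ratio_order:
  assumes "three_edge_connected V D"
  shows "twisted_graph V D ratio_order (\<Union>v\<in>V. circuits_within ratio_order (star_cocircuit D v))"
proof -
  have no_loops: "(u, u) \<notin> D" for u
    using digraph unfolding digraph_def by blast
  have stars: "pairwise_conformal (circuits_within ratio_order (star_cocircuit D v))
      \<and> compose_family (circuits_within ratio_order (star_cocircuit D v)) = star_cocircuit D v" for v
    using no_loops by (intro compose_circuits_within_ratio_order) (auto simp: circulation_def)
  have disjoint: "circuits_within ratio_order (star_cocircuit D v)
      \<inter> circuits_within ratio_order (star_cocircuit D w) = {}" if "v \<noteq> w" for v w
    using that pos_circuit_nonempty unfolding circuits_within_def by fastforce
  note total = strict_total_order_ratio_order
  show ?thesis
    unfolding twisted_graph_def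
  proof (intro conjI exI[of _ "\<lambda>v. circuits_within ratio_order (star_cocircuit D v)"] ballI impI)
    show "strict_partial_order_on D ratio_order"
      using total unfolding strict_total_order_on_def strict_partial_order_on_def by blast
    show "(\<Union>v\<in>V. circuits_within ratio_order (star_cocircuit D v)) \<subseteq> circuits_po D ratio_order"
      unfolding circuits_po_total_order[OF total] circuits_within_def by blast
    show "strong_map V D L" if "L \<in> linear_extensions D ratio_order" for L
      using strong_map_ratio_order that by (simp add: linear_extensions_total_order[OF total])
  qed (use digraph assms stars disjoint in auto)
qed

end

lemma exists_circulation_ratio:
  assumes dg: "digraph V D" and tc: "totally_cyclic D" and tec: "three_edge_connected V D"
  shows "\<exists>f g. circulation_ratio V D f g"
proof -
  have finD: "finite D"
    using dg unfolding digraph_def by (auto intro: finite_subset)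
  have "{cycle_edges vs | vs. directed_cycle D vs} \<subseteq> Pow D"
    unfolding cycle_edges_def directed_cycle_def by auto
  with finD obtain Zs where Zs: "set Zs = {cycle_edges vs | vs. directed_cycle D vs}"
    by (meson finite_Pow_iff finite_list finite_subset)
  have circ: "circulation D (\<lambda>x. of_bool (x \<in> Zs ! i))" if "i < length Zs" for i
  proof -
    from that Zs have "Zs ! i \<in> {cycle_edges vs | vs. directed_cycle D vs}"
      by (metis nth_mem)
    then obtain vs where "directed_cycle D vs" "Zs ! i = cycle_edges vs"
      by blast
    with circulation_directed_cycle finD show ?thesis by simp
  qed
  have in_Zs: "cycle_edges vs \<in> set Zs" if "directed_cycle D vs" for vs
    using Zs that by blast
  have cover: "\<exists>Z\<in>set Zs. x \<in> Z" if "x \<in> D" for x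
    using tc that in_Zs unfolding totally_cyclic_def by blast
  have "\<exists>Z\<in>set Zs. x \<in> Z \<longleftrightarrow> y \<notin> Z" if "x \<in> D" "y \<in> D" "x \<noteq> y" for x y
    using directed_cycle_separating_edges[OF dg tc tec that] in_Zs by blast
  from exists_injective_ratio_of_indicators[OF finD cover this] obtain t :: real
    where "inj_on (\<lambda>x. (\<Sum>i<length Zs. t ^ i * of_bool (x \<in> Zs ! i))
      / (\<Sum>i<length Zs. of_bool (x \<in> Zs ! i))) D" ..
  moreover have "circulation D (\<lambda>x. \<Sum>i<length Zs. t ^ i * of_bool (x \<in> Zs ! i))"
    "circulation D (\<lambda>x. \<Sum>i<length Zs. 1 * of_bool (x \<in> Zs ! i))"
    by (intro circulation_sum circ; simp)+
  moreover have "0 < (\<Sum>i<length Zs. of_bool (x \<in> Zs ! i) :: real)" if "x \<in> D" for x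
  proof -
    from cover[OF that] obtain Z where "Z \<in> set Zs" "x \<in> Z" ..
    then show ?thesis by (rule sum_indicators_pos)
  qed
  ultimately have "circulation_ratio V D (\<lambda>x. \<Sum>i<length Zs. t ^ i * of_bool (x \<in> Zs ! i))
      (\<lambda>x. \<Sum>i<length Zs. of_bool (x \<in> Zs ! i))"
    using dg unfolding circulation_ratio_def by simp
  then show ?thesis by blast
qed

theorem lemmal:
  fixes V :: "'v set" and D :: "('v \<times> 'v) set"
  assumes "digraph V D"
    and "totally_cyclic D"
    and "three_edge_connected V D"
  shows "\<exists>P A. twisted_graph V D P A"
proof -
  obtain f g where "circulation_ratio V D f g"
    using exists_circulation_ratio[OF assms] by blast
  then interpret circulation_ratio V D f g .
  from twisted_graph_ratio_order[OF assms(3)] show ?thesis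
    by blast
qed

end
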